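(* Let $v$ be a pair potential with hard core $r_{\mathrm{hc}}>0$, finite range $R$, finite and bounded from below on $(r_{\mathrm{hc}},\infty)$, let $m\ge2$ be an integer with $R<(m+1)r_{\mathrm{hc}}$, $k=m-1$, and $\beta,p>0$. Then the kernel $K_{\beta,p}$ and the operator $\mathcal K_{\beta,p}$ defined below satisfy: (i) $K_{\beta,p}(x,y)=K_{\beta,p}(\mathsf s(y),\mathsf s(x))$; (ii) $K_{\beta,p}(x,y)>0$ for all $(x,y)\in(r_{\mathrm{hc}},\infty)^{2k}$; (iii) $\mathcal K_{\beta,p}$ is a compact operator in $L^2((r_{\mathrm{hc}},\infty)^k)$ (with respect to Lebesgue measure).
   Context: $v:\mathbb{R}_+\to\mathbb{R}\cup\{\infty\}$ measurable, $v\equiv\infty$ on $[0,r_{\mathrm{hc}}]$, $v\equiv0$ on $[R,\infty)$. For $\mathbf z=(z_1,\dots,z_k)$, $\mathbf z'=(z'_1,\dots,z'_k)$ define $V_p(\mathbf z)=\sum_{1\le i<j\le k+1}v(z_i+\dots+z_{j-1})+p\sum_{i=1}^kz_i$, $W(\mathbf z;\mathbf z')=\sum_{i=1}^k\sum_{j=1}^kv(z_i+\dots+z_k+z'_1+\dots+z'_j)$, $K_{\beta,p}(\mathbf z,\mathbf z')=\exp\bigl(-\beta(\tfrac12V_p(\mathbf z)+W(\mathbf z;\mathbf z')+\tfrac12V_p(\mathbf z'))\bigr)$, $\mathcal K_{\beta,p}f(\mathbf z)=\int_{(r_{\mathrm{hc}},\infty)^k}K_{\beta,p}(\mathbf z,\mathbf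 z')f(\mathbf z')\mathrm d\mathbf z'$, and $\mathsf s(z_1,\dots,z_k)=(z_k,\dots,z_1)$. *)

theory Defs
  imports "HOL-Analysis.Analysis"
begin

text \<open>Configurations z = (z_1,...,z_k) are represented as functions nat => real,
  using indices 0,...,k-1 (z_i of the paper is z (i-1)).\<close>

definition Vp :: "(real \<Rightarrow> ereal) \<Rightarrow> real \<Rightarrow> nat \<Rightarrow> (nat \<Rightarrow> real) \<Rightarrow> ereal" where
  "Vp v p k z = (\<Sum>i\<in>{0..k}. \<Sum>j\<in>{i<..k}. v (\<Sum>l\<in>{i..<j}. z l)) + ereal (p * (\<Sum>i<k. z i))"

definition Wint :: "(real \<Rightarrow> ereal) \<Rightarrow> nat \<Rightarrow> (nat \<Rightarrow> real) \<Rightarrow> (nat \<Rightarrow> real) \<Rightarrow> ereal" where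
  "Wint v k z z' = (\<Sum>i<k. \<Sum>j<k. v ((\<Sum>l\<in>{i..<k}. z l) + (\<Sum>l\<in>{..j}. z' l)))"

definition exp_neg_ereal :: "ereal \<Rightarrow> real" where
  "exp_neg_ereal x = (if x = \<infinity> then 0 else if x = -\<infinity> then 0 else exp (- real_of_ereal x))"

definition Kern :: "(real \<Rightarrow> ereal) \<Rightarrow> real \<Rightarrow> real \<Rightarrow> nat \<Rightarrow> (nat \<Rightarrow> real) \<Rightarrow> (nat \<Rightarrow> real) \<Rightarrow> real" where
  "Kern v \<beta> p k z z' = exp_neg_ereal (ereal \<beta> *
     (ereal (1/2) * Vp v p k z + Wint v k z z' + ereal (1/2) * Vp v p k z'))"

definition srev :: "nat \<Rightarrow> (nat \<Rightarrow> real) \<Rightarrow> (nat \<Rightarrow> real)" where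
  "srev k z = (\<lambda>i. if i < k then z (k - 1 - i) else z i)"

definition Mhc :: "nat \<Rightarrow> real \<Rightarrow> (nat \<Rightarrow> real) measure" where
  "Mhc k r = PiM {..<k} (\<lambda>_. restrict_space lborel {r<..})"

definition Kop :: "(real \<Rightarrow> ereal) \<Rightarrow> real \<Rightarrow> real \<Rightarrow> nat \<Rightarrow> real \<Rightarrow> ((nat \<Rightarrow> real) \<Rightarrow> real) \<Rightarrow> (nat \<Rightarrow> real) \<Rightarrow> real" where
  "Kop v \<beta> p k r f z = (\<integral>z'. Kern v \<beta> p k z z' * f z' \<partial>Mhc k r)"

definition L2 :: "'a measure \<Rightarrow> ('a \<Rightarrow> real) \<Rightarrow> bool" where
  "L2 M f \<longleftrightarrow> f \<in> borel_measurable M \<and> integrable M (\<lambda>x. (f x)^2)"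

definition compact_L2_op :: "'a measure \<Rightarrow> (('a \<Rightarrow> real) \<Rightarrow> ('a \<Rightarrow> real)) \<Rightarrow> bool" where
  "compact_L2_op M T \<longleftrightarrow>
     (\<forall>f. L2 M f \<longrightarrow> L2 M (T f)) \<and>
     (\<forall>f g (a::real). L2 M f \<longrightarrow> L2 M g \<longrightarrow>
        (AE x in M. T (\<lambda>y. f y + a * g y) x = T f x + a * T g x)) \<and>
     (\<forall>F. (\<forall>n. L2 M (F n) \<and> (\<integral>x. (F n x)^2 \<partial>M) \<le> 1) \<longrightarrow>
        (\<exists>(r::nat\<Rightarrow>nat) g. strict_mono r \<and> L2 M g \<and>
           (\<lambda>n. \<integral>x. (T (F (r n)) x - g x)^2 \<partial>M) \<longlonglongrightarrow> 0))"

end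

theory Submission
  imports Defs "HOL-Library.Diagonal_Subsequence"
begin

text \<open>
  Symmetry (i) is a reindexing: reversing both configurations and exchanging them permutes the
  pair sums in \<open>V\<^sub>p\<close> and \<open>W\<close>. On \<open>(r\<^sub>h\<^sub>c, \<infinity>)\<^sup>k\<close> every argument of \<open>v\<close> exceeds \<open>r\<^sub>h\<^sub>c\<close>, so all
  energies are finite and \<open>K\<close> is the exponential of a real number, which gives (ii).

  For (iii), \<open>v \<ge> C\<close> on \<open>(r\<^sub>h\<^sub>c, \<infinity>)\<close> and the pressure term is linear, so
  \<open>K(z, z') \<le> A e(z) e(z')\<close> with the square-integrable weight \<open>e(z) = exp (-\<beta>p/2 \<Sum> z\<^sub>i)\<close>.
  Such a kernel is Hilbert--Schmidt, and compactness is shown directly. A bounded sequence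
  \<open>F\<^sub>n\<close> has a subsequence whose pairings with every \<open>L\<^sup>2\<close> function converge: a diagonal argument
  handles the indicators of a countable \<open>\<inter>\<close>-stable generator, Dynkin's argument all sets of
  finite measure, and density of simple functions the rest. Then \<open>(\<K>F\<^sub>n)(z)\<close>, the pairing
  of \<open>F\<^sub>n\<close> with \<open>K(z, \<cdot>)\<close>, converges for every \<open>z\<close>, and dominated convergence with dominant
  \<open>2A\<parallel>e\<parallel> e\<close> gives convergence in \<open>L\<^sup>2\<close>.

  Only finiteness and the lower bound of \<open>v\<close> on \<open>(r\<^sub>h\<^sub>c, \<infinity>)\<close> are used.
\<close>

section \<open>Square-integrable functions\<close>

lemma L2_integrable_mult:
  assumes "L2 M f" "L2 M g"
  shows "integrable M (\<lambda>x. f x * g x)"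
proof (rule Bochner_Integration.integrable_bound[where f="\<lambda>x. (f x)^2 + (g x)^2"])
  show "integrable M (\<lambda>x. (f x)^2 + (g x)^2)" "(\<lambda>x. f x * g x) \<in> borel_measurable M"
    using assms by (auto simp: L2_def)
  have "\<bar>f x\<bar> * \<bar>g x\<bar> \<le> (f x)^2 + (g x)^2" for x
  proof -
    have "2 * \<bar>f x\<bar> * \<bar>g x\<bar> \<le> (f x)^2 + (g x)^2"
      using sum_squares_bound[of "\<bar>f x\<bar>" "\<bar>g x\<bar>"] by (simp add: power2_abs)
    moreover have "0 \<le> \<bar>f x\<bar> * \<bar>g x\<bar>" by simp
    ultimately show ?thesis by linarith
  qed
  then show "AE x in M. norm (f x * g x) \<le> norm ((f x)^2 + (g x)^2)"
    by (intro AE_I2) (simp add: abs_mult)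
qed

lemma L2_add:
  assumes "L2 M f" "L2 M g"
  shows "L2 M (\<lambda>x. f x + g x)"
proof -
  have "integrable M (\<lambda>x. (f x)^2 + 2 * (f x * g x) + (g x)^2)"
    using assms L2_integrable_mult[OF assms] by (auto simp: L2_def)
  then show ?thesis using assms by (simp add: L2_def power2_sum algebra_simps borel_measurable_add)
qed

lemma L2_cmult: "L2 M f \<Longrightarrow> L2 M (\<lambda>x. c * f x)"
  by (simp add: L2_def power_mult_distrib borel_measurable_times)

lemma L2_diff: "L2 M f \<Longrightarrow> L2 M g \<Longrightarrow> L2 M (\<lambda>x. f x - g x)"
  using L2_add[of M f "\<lambda>x. - g x"] L2_cmult[of M g "-1"] by simp

lemma L2_zero: "L2 M (\<lambda>x. 0)"
  by (simp add: L2_def)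

lemma L2_indicator:
  assumes "A \<in> sets M" "emeasure M A < \<infinity>"
  shows "L2 M (indicator A)"
proof -
  have "(\<lambda>x. (indicator A x :: real)^2) = indicator A"
    by (auto simp: indicator_def)
  then show ?thesis
    using assms sets.sets_into_space[OF assms(1)]
    by (simp add: L2_def integrable_indicator_iff Int_absorb1)
qed

lemma L2_dominated:
  assumes "f \<in> borel_measurable M" "L2 M g" "\<And>x. x \<in> space M \<Longrightarrow> \<bar>f x\<bar> \<le> \<bar>g x\<bar>"
  shows "L2 M f"
proof -
  have "integrable M (\<lambda>x. (f x)^2)"
  proof (rule Bochner_Integration.integrable_bound[where f="\<lambda>x. (g x)^2"])
    show "integrable M (\<lambda>x. (g x)^2)" using assms(2) by (simp add: L2_def)
    show "AE x in M. norm ((f x)^2) \<le> norm ((g x)^2)"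
      using assms(3) by (intro AE_I2) (simp add: abs_le_square_iff)
  qed (use assms(1) in simp)
  with assms(1) show ?thesis by (simp add: L2_def)
qed

lemma L2_dominated_convergence:
  assumes "\<And>i. s i \<in> borel_measurable M" "\<psi> \<in> borel_measurable M" "L2 M g"
    and "\<And>i x. x \<in> space M \<Longrightarrow> \<bar>s i x - \<psi> x\<bar> \<le> g x"
    and "\<And>x. x \<in> space M \<Longrightarrow> (\<lambda>i. s i x) \<longlonglongrightarrow> \<psi> x"
  shows "(\<lambda>i. \<integral>x. (s i x - \<psi> x)^2 \<partial>M) \<longlonglongrightarrow> 0"
proof -
  have "(\<lambda>i. (s i x - \<psi> x)^2) \<longlonglongrightarrow> 0" if "x \<in> space M" for x
    using tendsto_power[OF tendsto_diff[OF assms(5)[OF that] tendsto_const[of "\<psi> x"]], of 2] by simp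
  moreover have "\<bar>s i x - \<psi> x\<bar>^2 \<le> (g x)^2" if "x \<in> space M" for i x
    using assms(4)[OF that] by (intro power_mono) auto
  ultimately show ?thesis
    using integral_dominated_convergence[of "\<lambda>x. 0" M "\<lambda>i x. (s i x - \<psi> x)^2" "\<lambda>x. (g x)^2"] assms
    by (auto intro: AE_I2 simp: L2_def)
qed

lemma nonneg_quadratic_imp_discriminant:
  fixes a b c :: real
  assumes "a \<ge> 0" "\<And>t. 0 \<le> a * t^2 + 2 * b * t + c"
  shows "b^2 \<le> a * c"
proof (cases "a = 0")
  case True
  have "0 \<le> 2 * b * (- (c + 1) / (2 * b)) + c" if "b \<noteq> 0"
    using assms(2)[of "- (c + 1) / (2 * b)"] True by simp
  then show ?thesis using True assms(2)[of 0] by (cases "b = 0") auto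
next
  case False
  then have "a > 0" using assms(1) by simp
  have "0 \<le> a * (-b/a)^2 + 2 * b * (-b/a) + c" by (rule assms(2))
  also have "\<dots> = c - b^2 / a"
    using \<open>a > 0\<close> by (simp add: power2_eq_square field_simps)
  finally show ?thesis using \<open>a > 0\<close> by (simp add: pos_divide_le_eq mult.commute)
qed

lemma L2_Cauchy_Schwarz:
  assumes f: "L2 M f" and g: "L2 M g"
  shows "\<bar>\<integral>x. f x * g x \<partial>M\<bar> \<le> sqrt (\<integral>x. (f x)^2 \<partial>M) * sqrt (\<integral>x. (g x)^2 \<partial>M)"
proof -
  have "(\<integral>x. f x * g x \<partial>M)^2 \<le> (\<integral>x. (g x)^2 \<partial>M) * (\<integral>x. (f x)^2 \<partial>M)"
  proof (rule nonneg_quadratic_imp_discriminant)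
    fix t
    have "0 \<le> (\<integral>x. (f x + t * g x)^2 \<partial>M)" by simp
    also have "\<dots> = (\<integral>x. t^2 * (g x)^2 + 2 * t * (f x * g x) + (f x)^2 \<partial>M)"
      by (rule Bochner_Integration.integral_cong) (auto simp: power2_eq_square algebra_simps)
    also have "\<dots> = t^2 * (\<integral>x. (g x)^2 \<partial>M) + 2 * t * (\<integral>x. f x * g x \<partial>M) + (\<integral>x. (f x)^2 \<partial>M)"
      using f g L2_integrable_mult[OF f g] by (simp add: L2_def)
    finally show "0 \<le> (\<integral>x. (g x)^2 \<partial>M) * t^2 + 2 * (\<integral>x. f x * g x \<partial>M) * t + (\<integral>x. (f x)^2 \<partial>M)"
      by (simp add: algebra_simps)
  qed simp
  then have "sqrt ((\<integral>x. f x * g x \<partial>M)^2) \<le> sqrt ((\<integral>x. (f x)^2 \<partial>M) * (\<integral>x. (g x)^2 \<partial>M))"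
    by (intro real_sqrt_le_mono) (simp add: mult.commute)
  also have "\<dots> = sqrt (\<integral>x. (f x)^2 \<partial>M) * sqrt (\<integral>x. (g x)^2 \<partial>M)"
    by (rule real_sqrt_mult)
  finally show ?thesis by simp
qed

section \<open>Weakly convergent subsequences in \<open>L\<^sup>2\<close>\<close>

locale countable_generator =
  fixes M :: "'a measure" and G :: "'a set set" and E :: "nat \<Rightarrow> 'a set"
  assumes countable_G: "countable G" and Int_stable_G: "Int_stable G"
    and G_subset: "G \<subseteq> Pow (space M)" and sets_eq: "sets M = sigma_sets (space M) G"
    and E_in_G: "\<And>j. E j \<in> G" and emeasure_E_finite: "\<And>j. emeasure M (E j) < \<infinity>"
    and incseq_E: "incseq E" and UN_E: "(\<Union>j. E j) = space M"
begin

lemma sets_E: "E j \<in> sets M"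
  using E_in_G sets_eq by auto

lemma sigma_finite: "sigma_finite_measure M"
proof
  show "\<exists>A. countable A \<and> A \<subseteq> sets M \<and> \<Union> A = space M \<and> (\<forall>a\<in>A. emeasure M a \<noteq> \<infinity>)"
    using sets_E emeasure_E_finite UN_E by (intro exI[of _ "range E"]) (auto simp: less_top)
qed

end

definition pairing_convergent :: "'a measure \<Rightarrow> (nat \<Rightarrow> 'a \<Rightarrow> real) \<Rightarrow> ('a \<Rightarrow> real) \<Rightarrow> bool" where
  "pairing_convergent M F \<psi> \<longleftrightarrow> L2 M \<psi> \<and> convergent (\<lambda>n. \<integral>x. F n x * \<psi> x \<partial>M)"

locale L2_bounded_seq =
  fixes M :: "'a measure" and F :: "nat \<Rightarrow> 'a \<Rightarrow> real"
  assumes L2_F: "\<And>n. L2 M (F n)" and norm_F: "\<And>n. (\<integral>x. (F n x)^2 \<partial>M) \<le> 1"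
begin

lemma abs_pairing_le:
  assumes "L2 M \<psi>"
  shows "\<bar>\<integral>x. F n x * \<psi> x \<partial>M\<bar> \<le> sqrt (\<integral>x. (\<psi> x)^2 \<partial>M)"
proof -
  have "\<bar>\<integral>x. F n x * \<psi> x \<partial>M\<bar> \<le> sqrt (\<integral>x. (F n x)^2 \<partial>M) * sqrt (\<integral>x. (\<psi> x)^2 \<partial>M)"
    by (rule L2_Cauchy_Schwarz[OF L2_F assms])
  also have "\<dots> \<le> sqrt (\<integral>x. (\<psi> x)^2 \<partial>M)"
    using norm_F[of n] by (intro mult_left_le_one_le) auto
  finally show ?thesis .
qed

lemma abs_pairing_diff_le:
  assumes "L2 M \<psi>" "L2 M \<phi>"
  shows "\<bar>(\<integral>x. F n x * \<psi> x \<partial>M) - (\<integral>x. F n x * \<phi> x \<partial>M)\<bar> \<le> sqrt (\<integral>x. (\<phi> x - \<psi> x)^2 \<partial>M)"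
proof -
  have "(\<integral>x. F n x * \<psi> x \<partial>M) - (\<integral>x. F n x * \<phi> x \<partial>M) = (\<integral>x. F n x * (\<psi> x - \<phi> x) \<partial>M)"
    using L2_integrable_mult[OF L2_F assms(1)] L2_integrable_mult[OF L2_F assms(2)]
    by (simp add: right_diff_distrib)
  also have "\<bar>\<dots>\<bar> \<le> sqrt (\<integral>x. (\<psi> x - \<phi> x)^2 \<partial>M)"
    by (rule abs_pairing_le[OF L2_diff[OF assms]])
  finally show ?thesis by (simp add: power2_commute)
qed

lemma pairing_convergent_zero: "pairing_convergent M F (\<lambda>x. 0)"
  by (simp add: pairing_convergent_def L2_zero convergent_const)

lemma pairing_convergent_add_cmult:
  assumes "pairing_convergent M F a" "pairing_convergent M F b"
  shows "pairing_convergent M F (\<lambda>x. a x + c * b x)"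
proof -
  have La: "L2 M a" and Lb: "L2 M b" using assms by (auto simp: pairing_convergent_def)
  have "(\<integral>x. F n x * (a x + c * b x) \<partial>M) = (\<integral>x. F n x * a x \<partial>M) + c * (\<integral>x. F n x * b x \<partial>M)" for n
  proof -
    have "(\<integral>x. F n x * (a x + c * b x) \<partial>M) = (\<integral>x. F n x * a x + c * (F n x * b x) \<partial>M)"
      by (simp add: algebra_simps)
    then show ?thesis
      using L2_integrable_mult[OF L2_F La] L2_integrable_mult[OF L2_F Lb] by simp
  qed
  moreover have "convergent (\<lambda>n. (\<integral>x. F n x * a x \<partial>M) + c * (\<integral>x. F n x * b x \<partial>M))"
  proof -
    obtain A B where "(\<lambda>n. \<integral>x. F n x * a x \<partial>M) \<longlonglongrightarrow> A" "(\<lambda>n. \<integral>x. F n x * b x \<partial>M) \<longlonglongrightarrow> B"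
      using assms unfolding pairing_convergent_def convergent_def by blast
    then show ?thesis by (intro convergentI[of _ "A + c * B"] tendsto_add tendsto_mult_left)
  qed
  ultimately show ?thesis
    using L2_add[OF La L2_cmult[OF Lb]] by (simp add: pairing_convergent_def)
qed

lemma pairing_convergent_cong:
  assumes "\<And>x. x \<in> space M \<Longrightarrow> \<psi> x = \<phi> x" "pairing_convergent M F \<phi>"
  shows "pairing_convergent M F \<psi>"
proof -
  have "L2 M \<phi>" using assms(2) by (simp add: pairing_convergent_def)
  then have "L2 M \<psi>"
    using assms(1) measurable_cong[of M \<psi> \<phi>] Bochner_Integration.integrable_cong[of M M "\<lambda>x. (\<psi> x)^2" "\<lambda>x. (\<phi> x)^2"]
    by (simp add: L2_def)
  moreover have "(\<integral>x. F n x * \<psi> x \<partial>M) = (\<integral>x. F n x * \<phi> x \<partial>M)" for n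
    using assms(1) by (intro Bochner_Integration.integral_cong) auto
  ultimately show ?thesis using assms(2) by (simp add: pairing_convergent_def)
qed

lemma pairing_convergent_sum:
  assumes "finite Y" "\<And>y. y \<in> Y \<Longrightarrow> pairing_convergent M F (t y)"
  shows "pairing_convergent M F (\<lambda>x. \<Sum>y\<in>Y. t y x)"
  using assms
proof (induction Y rule: finite_induct)
  case empty
  then show ?case using pairing_convergent_zero by simp
next
  case (insert a Y)
  then have "pairing_convergent M F (\<lambda>x. t a x + 1 * (\<Sum>y\<in>Y. t y x))"
    by (intro pairing_convergent_add_cmult) auto
  then show ?case using insert by simp
qed

lemma pairing_convergent_L2_limit:
  assumes L: "L2 M \<psi>" and \<phi>: "\<And>i. pairing_convergent M F (\<phi> i)"
    and lim: "(\<lambda>i. \<integral>x. (\<phi> i x - \<psi> x)^2 \<partial>M) \<longlonglongrightarrow> 0"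
  shows "pairing_convergent M F \<psi>"
proof -
  have "Cauchy (\<lambda>n. \<integral>x. F n x * \<psi> x \<partial>M)"
  proof (rule CauchyI)
    fix e :: real assume e: "0 < e"
    obtain i where "\<bar>\<integral>x. (\<phi> i x - \<psi> x)^2 \<partial>M\<bar> < (e/3)^2"
      using LIMSEQ_D[OF lim, of "(e/3)^2"] e by force
    then have "sqrt (\<integral>x. (\<phi> i x - \<psi> x)^2 \<partial>M) < sqrt ((e/3)^2)"
      by (intro real_sqrt_less_mono) simp
    then have close: "\<bar>(\<integral>x. F n x * \<psi> x \<partial>M) - (\<integral>x. F n x * \<phi> i x \<partial>M)\<bar> < e/3" for n
      using abs_pairing_diff_le[OF L, of "\<phi> i" n] \<phi>[of i] e by (simp add: pairing_convergent_def)
    have "Cauchy (\<lambda>n. \<integral>x. F n x * \<phi> i x \<partial>M)"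
      using \<phi>[of i] by (simp add: pairing_convergent_def Cauchy_convergent_iff)
    then obtain N where N: "\<And>m n. m \<ge> N \<Longrightarrow> n \<ge> N \<Longrightarrow>
        \<bar>(\<integral>x. F m x * \<phi> i x \<partial>M) - (\<integral>x. F n x * \<phi> i x \<partial>M)\<bar> < e/3"
      using CauchyD[of _ "e/3"] e by force
    show "\<exists>N. \<forall>m\<ge>N. \<forall>n\<ge>N. norm ((\<integral>x. F m x * \<psi> x \<partial>M) - (\<integral>x. F n x * \<psi> x \<partial>M)) < e"
    proof (intro exI allI impI)
      fix m n assume "m \<ge> N" "n \<ge> N"
      then show "norm ((\<integral>x. F m x * \<psi> x \<partial>M) - (\<integral>x. F n x * \<psi> x \<partial>M)) < e"
        unfolding real_norm_def using close[of m] close[of n] N[of m n] by linarith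
    qed
  qed
  then show ?thesis using L by (simp add: pairing_convergent_def Cauchy_convergent_iff)
qed

lemma pairing_convergent_indicator_disjoint_UN:
  fixes A :: "nat \<Rightarrow> 'a set"
  assumes disj: "disjoint_family A" and A: "\<And>i. A i \<in> sets M"
    and B: "B \<in> sets M" "emeasure M B < \<infinity>"
    and conv: "\<And>i. pairing_convergent M F (indicator (A i \<inter> B))"
  shows "pairing_convergent M F (indicator ((\<Union>i. A i) \<inter> B))"
proof -
  define \<psi> where "\<psi> = (indicator ((\<Union>i. A i) \<inter> B) :: 'a \<Rightarrow> real)"
  define \<phi> where "\<phi> n = (indicator ((\<Union>i<n. A i) \<inter> B) :: 'a \<Rightarrow> real)" for n
  have \<phi>_Suc: "\<phi> (Suc n) x = \<phi> n x + 1 * indicator (A n \<inter> B) x" for n x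
  proof -
    have "x \<notin> A i" if "x \<in> A n" "i < n" for i
      using disjoint_family_onD[OF disj, of i n] that by auto
    then show ?thesis by (auto simp: \<phi>_def indicator_def lessThan_Suc)
  qed
  have conv_\<phi>: "pairing_convergent M F (\<phi> n)" for n
  proof (induction n)
    case 0
    show ?case using pairing_convergent_zero by (simp add: \<phi>_def)
  next
    case (Suc n)
    then show ?case
      unfolding \<phi>_Suc[abs_def] using conv by (intro pairing_convergent_add_cmult)
  qed
  have lim_\<phi>: "(\<lambda>n. \<integral>x. (\<phi> n x - \<psi> x)^2 \<partial>M) \<longlonglongrightarrow> 0"
  proof (rule L2_dominated_convergence[where g="indicator B"])
    show "L2 M (indicator B)" using B by (rule L2_indicator)
    show "\<bar>\<phi> n x - \<psi> x\<bar> \<le> indicator B x" for n x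
      by (auto simp: \<phi>_def \<psi>_def indicator_def)
    show "(\<lambda>n. \<phi> n x) \<longlonglongrightarrow> \<psi> x" for x
    proof (cases "x \<in> (\<Union>i. A i)")
      case True
      then obtain i0 where "x \<in> A i0" by auto
      then have "\<forall>n\<ge>Suc i0. \<phi> n x = \<psi> x" by (auto simp: \<phi>_def \<psi>_def indicator_def)
      then show ?thesis
        by (intro tendsto_eventually) (auto simp: eventually_sequentially)
    next
      case False
      then show ?thesis by (simp add: \<phi>_def \<psi>_def indicator_def)
    qed
  qed (use A B in \<open>auto simp: \<phi>_def \<psi>_def\<close>)
  have "emeasure M ((\<Union>i. A i) \<inter> B) \<le> emeasure M B"
    using B by (intro emeasure_mono) auto
  then have "L2 M \<psi>"
    unfolding \<psi>_def using A B by (intro L2_indicator) auto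
  then show ?thesis
    using pairing_convergent_L2_limit[OF _ conv_\<phi> lim_\<phi>] by (simp add: \<psi>_def)
qed

end

locale generator_convergent_seq = countable_generator M G E + L2_bounded_seq M F
  for M :: "'a measure" and G E F +
  assumes pairing_convergent_generator: "\<And>A j. A \<in> G \<Longrightarrow> pairing_convergent M F (indicator (A \<inter> E j))"
begin

lemma pairing_convergent_indicator_Int:
  assumes "A \<in> sets M"
  shows "pairing_convergent M F (indicator (A \<inter> E j))"
proof -
  have "A \<in> sigma_sets (space M) G" using assms sets_eq by simp
  with Int_stable_G G_subset have "\<forall>j. pairing_convergent M F (indicator (A \<inter> E j))"
  proof (induction rule: sigma_sets_induct_disjoint)
    case (basic A)
    then show ?case using pairing_convergent_generator by blast
  next
    case empty
    show ?case using pairing_convergent_zero by simp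
  next
    case (compl A)
    show ?case
    proof
      fix j
      have "pairing_convergent M F (\<lambda>x. indicator (E j \<inter> E j) x + (-1) * indicator (A \<inter> E j) x)"
        using compl pairing_convergent_generator[OF E_in_G, of j j]
        by (intro pairing_convergent_add_cmult) auto
      then show "pairing_convergent M F (indicator ((space M - A) \<inter> E j))"
        by (rule pairing_convergent_cong[rotated]) (auto simp: indicator_def)
    qed
  next
    case (union A)
    have "A i \<in> sets M" for i using union(2) sets_eq by auto
    then show ?case
      using union(1,3) sets_E emeasure_E_finite by (blast intro: pairing_convergent_indicator_disjoint_UN)
  qed
  then show ?thesis by blast
qed

lemma pairing_convergent_indicator:
  assumes A: "A \<in> sets M" and finite: "emeasure M A < \<infinity>"
  shows "pairing_convergent M F (indicator A)"
proof (rule pairing_convergent_L2_limit[OF L2_indicator[OF assms]])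
  show "pairing_convergent M F (indicator (A \<inter> E j))" for j
    using A by (rule pairing_convergent_indicator_Int)
  show "(\<lambda>j. \<integral>x. (indicator (A \<inter> E j) x - indicator A x :: real)^2 \<partial>M) \<longlonglongrightarrow> 0"
  proof (rule L2_dominated_convergence[where g="indicator A"])
    show "(\<lambda>j. indicator (A \<inter> E j) x :: real) \<longlonglongrightarrow> indicator A x" if "x \<in> space M" for x
    proof -
      obtain j0 where "x \<in> E j0" using \<open>x \<in> space M\<close> UN_E by auto
      then have "\<forall>j\<ge>j0. x \<in> E j" using incseq_E by (auto simp: incseq_def)
      then show ?thesis
        by (intro tendsto_eventually) (auto simp: eventually_sequentially indicator_def)
    qed
  qed (use assms sets_E L2_indicator in \<open>auto simp: indicator_def\<close>)
qed

lemma pairing_convergent_simple: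
  assumes s: "simple_function M s" and L2_s: "L2 M s"
  shows "pairing_convergent M F s"
proof -
  have level: "pairing_convergent M F (\<lambda>x. y * indicator (s -` {y} \<inter> space M) x)" for y
  proof (cases "y = 0")
    case True
    then show ?thesis using pairing_convergent_zero by simp
  next
    case False
    let ?S = "s -` {y} \<inter> space M"
    have S: "?S \<in> sets M" using s by (rule simple_functionD(2))
    have "L2 M (indicator ?S)"
    proof (rule L2_dominated[OF _ L2_cmult[OF L2_s, of "1 / y"]])
      show "\<bar>indicator ?S x\<bar> \<le> \<bar>1 / y * s x\<bar>" for x
        using False by (auto simp: indicator_def)
    qed (use S in simp)
    moreover have "(\<lambda>x. (indicator ?S x :: real)^2) = indicator ?S"
      by (auto simp: indicator_def)
    ultimately have "integrable M (indicator ?S :: 'a \<Rightarrow> real)"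
      unfolding L2_def by metis
    moreover have "?S \<inter> space M = ?S" by blast
    ultimately have "emeasure M ?S < \<infinity>"
      by (simp add: integrable_indicator_iff)
    then have "pairing_convergent M F (\<lambda>x. 0 + y * indicator ?S x)"
      by (intro pairing_convergent_add_cmult pairing_convergent_zero pairing_convergent_indicator S)
    then show ?thesis by simp
  qed
  have "pairing_convergent M F (\<lambda>x. \<Sum>y\<in>s ` space M. y * indicator (s -` {y} \<inter> space M) x)"
    using simple_functionD(1)[OF s] level by (intro pairing_convergent_sum)
  then show ?thesis
  proof (rule pairing_convergent_cong[rotated])
    fix x assume "x \<in> space M"
    then have "s x = (\<Sum>y\<in>s ` space M. indicator (s -` {y} \<inter> space M) x *\<^sub>R y)"
      by (rule simple_function_indicator_representation_banach[OF s])
    then show "s x = (\<Sum>y\<in>s ` space M. y * indicator (s -` {y} \<inter> space M) x)"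
      by (simp only: real_scaleR_def mult.commute)
  qed
qed

theorem pairing_convergent_L2:
  assumes L2_\<psi>: "L2 M \<psi>"
  shows "pairing_convergent M F \<psi>"
proof -
  have \<psi>: "\<psi> \<in> borel_measurable M" using L2_\<psi> by (simp add: L2_def)
  obtain s where s: "\<And>i. simple_function M (s i)"
    and lim: "\<And>x. x \<in> space M \<Longrightarrow> (\<lambda>i. s i x) \<longlonglongrightarrow> \<psi> x"
    and bound: "\<And>i x. x \<in> space M \<Longrightarrow> dist (s i x) 0 \<le> 2 * dist (\<psi> x) 0"
    using borel_measurable_implies_sequence_metric[OF \<psi>, of 0] by blast
  have s_meas: "s i \<in> borel_measurable M" for i
    using s by (rule borel_measurable_simple_function)
  have L2_s: "L2 M (s i)" for i
    using bound by (intro L2_dominated[OF s_meas L2_cmult[OF L2_\<psi>, of 2]]) (auto simp: abs_mult)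
  have "(\<lambda>i. \<integral>x. (s i x - \<psi> x)^2 \<partial>M) \<longlonglongrightarrow> 0"
  proof (rule L2_dominated_convergence[OF s_meas \<psi> _ _ lim])
    show "L2 M (\<lambda>x. 3 * \<bar>\<psi> x\<bar>)"
      using \<psi> by (intro L2_dominated[OF _ L2_cmult[OF L2_\<psi>, of 3]]) auto
    show "\<bar>s i x - \<psi> x\<bar> \<le> 3 * \<bar>\<psi> x\<bar>" if "x \<in> space M" for i x
      using bound[OF that, of i] by simp
  qed
  then show ?thesis
    by (intro pairing_convergent_L2_limit[OF L2_\<psi>, of s] pairing_convergent_simple s L2_s)
qed

end

lemma (in countable_generator) L2_bounded_weakly_convergent_subseq:
  assumes "L2_bounded_seq M F"
  shows "\<exists>r. strict_mono r \<and> (\<forall>\<psi>. L2 M \<psi> \<longrightarrow> convergent (\<lambda>n. \<integral>x. F (r n) x * \<psi> x \<partial>M))"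
proof -
  interpret L2_bounded_seq M F by fact
  have G_nonempty: "G \<noteq> {}" using E_in_G by blast
  define g where "g n = from_nat_into G (fst (prod_decode n)) \<inter> E (snd (prod_decode n))" for n
  have g_sets: "g n \<in> sets M" for n
    unfolding g_def using from_nat_into[OF G_nonempty] sets_eq sets_E by (intro sets.Int) auto
  have "emeasure M (g n) \<le> emeasure M (E (snd (prod_decode n)))" for n
    using sets_E unfolding g_def by (intro emeasure_mono) auto
  then have L2_g: "L2 M (indicator (g n))" for n
    using g_sets emeasure_E_finite by (intro L2_indicator) (auto intro: le_less_trans)
  define a where "a n m = (\<integral>x. F m x * indicator (g n) x \<partial>M)" for n m
  interpret subseqs "\<lambda>n s. convergent (\<lambda>i. a n (s i))"
  proof
    fix n and s :: "nat \<Rightarrow> nat"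
    have "bounded (range (\<lambda>i. a n (s i)))"
      using abs_pairing_le[OF L2_g] unfolding a_def bounded_iff real_norm_def by blast
    then obtain l r where "strict_mono r" "((\<lambda>i. a n (s i)) \<circ> r) \<longlonglongrightarrow> l"
      using bounded_imp_convergent_subsequence by blast
    then show "\<exists>r'. strict_mono r' \<and> convergent (\<lambda>i. a n ((s \<circ> r') i))"
      by (auto simp: convergent_def o_def)
  qed
  have "convergent (\<lambda>i. a n (diagseq i))" for n
  proof -
    have "convergent (\<lambda>i. a n ((diagseq \<circ> (+) (Suc n)) i))"
    proof (rule diagseq_holds)
      fix r s :: "nat \<Rightarrow> nat" and n assume "strict_mono r" "convergent (\<lambda>i. a n (s i))"
      then show "convergent (\<lambda>i. a n ((s \<circ> r) i))"
        using convergent_subseq_convergent by (auto simp: o_def)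
    qed
    then show ?thesis
      using convergent_ignore_initial_segment[of "\<lambda>i. a n (diagseq i)" "Suc n"]
      by (simp add: o_def add.commute)
  qed
  note conv = this
  have g_encode: "g (prod_encode (to_nat_on G A, j)) = A \<inter> E j" if "A \<in> G" for A j
    using that countable_G by (simp add: g_def)
  interpret generator_convergent_seq M G E "\<lambda>n. F (diagseq n)"
  proof (intro generator_convergent_seq.intro generator_convergent_seq_axioms.intro L2_bounded_seq.intro)
    show "countable_generator M G E" by (rule countable_generator_axioms)
    show "L2 M (F (diagseq n))" "(\<integral>x. (F (diagseq n) x)^2 \<partial>M) \<le> 1" for n
      by (rule L2_F, rule norm_F)
    show "pairing_convergent M (\<lambda>n. F (diagseq n)) (indicator (A \<inter> E j))" if "A \<in> G" for A j
      using conv[of "prod_encode (to_nat_on G A, j)"] L2_g[of "prod_encode (to_nat_on G A, j)"]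
      unfolding pairing_convergent_def a_def g_encode[OF that] by blast
  qed
  show ?thesis
    using subseq_diagseq pairing_convergent_L2 by (auto simp: pairing_convergent_def)
qed

section \<open>Integral operators with a product-dominated kernel\<close>

locale product_dominated_kernel = countable_generator M G E
  for M :: "'a measure" and G E +
  fixes K :: "'a \<Rightarrow> 'a \<Rightarrow> real" and e :: "'a \<Rightarrow> real" and A :: real
  assumes K_measurable: "(\<lambda>(z, z'). K z z') \<in> borel_measurable (M \<Otimes>\<^sub>M M)"
    and L2_e: "L2 M e" and e_nonneg: "\<And>z. z \<in> space M \<Longrightarrow> 0 \<le> e z" and A_nonneg: "0 \<le> A"
    and K_bound: "\<And>z z'. z \<in> space M \<Longrightarrow> z' \<in> space M \<Longrightarrow> \<bar>K z z'\<bar> \<le> A * e z * e z'"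
begin

definition kernel_op :: "('a \<Rightarrow> real) \<Rightarrow> 'a \<Rightarrow> real" where
  "kernel_op f z = (\<integral>z'. K z z' * f z' \<partial>M)"

definition op_bound :: real where
  "op_bound = A * sqrt (\<integral>z. (e z)^2 \<partial>M)"

lemma op_bound_nonneg: "0 \<le> op_bound"
  using A_nonneg by (simp add: op_bound_def)

lemma L2_kernel_row:
  assumes z: "z \<in> space M"
  shows "L2 M (K z)"
proof (rule L2_dominated[OF _ L2_cmult[OF L2_e, of "A * e z"]])
  show "K z \<in> borel_measurable M"
    using measurable_Pair2[OF K_measurable z] by simp
  show "\<bar>K z z'\<bar> \<le> \<bar>A * e z * e z'\<bar>" if "z' \<in> space M" for z'
    using K_bound[OF z that] by simp
qed

lemma integrable_kernel_mult: "L2 M f \<Longrightarrow> z \<in> space M \<Longrightarrow> integrable M (\<lambda>z'. K z z' * f z')"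
  using L2_integrable_mult[OF L2_kernel_row] by blast

lemma kernel_op_measurable:
  assumes "L2 M f"
  shows "kernel_op f \<in> borel_measurable M"
proof -
  have "(\<lambda>(z, z'). K z z' * f z') \<in> borel_measurable (M \<Otimes>\<^sub>M M)"
    using borel_measurable_times[OF K_measurable measurable_compose[OF measurable_snd]] assms
    by (simp add: L2_def case_prod_beta')
  then show ?thesis unfolding kernel_op_def[abs_def]
    by (rule sigma_finite_measure.borel_measurable_lebesgue_integral[OF sigma_finite])
qed

lemma abs_kernel_op_le:
  assumes f: "L2 M f" and z: "z \<in> space M"
  shows "\<bar>kernel_op f z\<bar> \<le> op_bound * e z * sqrt (\<integral>x. (f x)^2 \<partial>M)"
proof -
  have "(\<integral>z'. (K z z')^2 \<partial>M) \<le> (\<integral>z'. (A * e z)^2 * (e z')^2 \<partial>M)"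
  proof (rule integral_mono)
    show "(K z z')^2 \<le> (A * e z)^2 * (e z')^2" if "z' \<in> space M" for z'
    proof -
      have "\<bar>K z z'\<bar>^2 \<le> (A * e z * e z')^2"
        using K_bound[OF z that] by (intro power_mono) auto
      then show ?thesis by (simp add: power_mult_distrib)
    qed
  qed (use L2_kernel_row[OF z] L2_e in \<open>auto simp: L2_def\<close>)
  also have "\<dots> = (op_bound * e z)^2"
    by (simp add: op_bound_def power_mult_distrib)
  finally have "sqrt (\<integral>z'. (K z z')^2 \<partial>M) \<le> op_bound * e z"
    using op_bound_nonneg e_nonneg[OF z] by (simp add: real_le_lsqrt)
  then have "sqrt (\<integral>z'. (K z z')^2 \<partial>M) * sqrt (\<integral>x. (f x)^2 \<partial>M)
      \<le> op_bound * e z * sqrt (\<integral>x. (f x)^2 \<partial>M)"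
    by (rule mult_right_mono) simp
  with L2_Cauchy_Schwarz[OF L2_kernel_row[OF z] f] show ?thesis
    unfolding kernel_op_def by linarith
qed

lemma L2_kernel_op:
  assumes f: "L2 M f"
  shows "L2 M (kernel_op f)"
proof (rule L2_dominated[OF kernel_op_measurable[OF f]])
  show "L2 M (\<lambda>z. op_bound * sqrt (\<integral>x. (f x)^2 \<partial>M) * e z)"
    by (rule L2_cmult[OF L2_e])
  show "\<bar>kernel_op f z\<bar> \<le> \<bar>op_bound * sqrt (\<integral>x. (f x)^2 \<partial>M) * e z\<bar>" if "z \<in> space M" for z
    using abs_kernel_op_le[OF f that] by (simp add: mult_ac)
qed

lemma kernel_op_add_cmult:
  assumes f: "L2 M f" and g: "L2 M g" and z: "z \<in> space M"
  shows "kernel_op (\<lambda>y. f y + a * g y) z = kernel_op f z + a * kernel_op g z"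
proof -
  have "kernel_op (\<lambda>y. f y + a * g y) z = (\<integral>z'. K z z' * f z' + a * (K z z' * g z') \<partial>M)"
    unfolding kernel_op_def by (simp add: algebra_simps)
  also have "\<dots> = kernel_op f z + a * kernel_op g z"
    unfolding kernel_op_def using integrable_kernel_mult[OF f z] integrable_kernel_mult[OF g z] by simp
  finally show ?thesis .
qed

lemma kernel_op_L2_convergent_subseq:
  assumes "L2_bounded_seq M F"
  shows "\<exists>r g. strict_mono r \<and> L2 M g \<and> (\<lambda>n. \<integral>x. (kernel_op (F (r n)) x - g x)^2 \<partial>M) \<longlonglongrightarrow> 0"
proof -
  interpret L2_bounded_seq M F by fact
  obtain r where r: "strict_mono r"
    and weak: "\<And>\<psi>. L2 M \<psi> \<Longrightarrow> convergent (\<lambda>n. \<integral>x. F (r n) x * \<psi> x \<partial>M)"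
    using L2_bounded_weakly_convergent_subseq[OF assms] by blast
  define g where "g z = lim (\<lambda>n. kernel_op (F (r n)) z)" for z
  have lim: "(\<lambda>n. kernel_op (F (r n)) z) \<longlonglongrightarrow> g z" if z: "z \<in> space M" for z
    using weak[OF L2_kernel_row[OF z]] unfolding g_def kernel_op_def
    by (simp add: mult.commute convergent_LIMSEQ_iff)
  have g_meas: "g \<in> borel_measurable M"
    by (rule borel_measurable_LIMSEQ_real[OF lim kernel_op_measurable[OF L2_F]])
  have bound: "\<bar>kernel_op (F (r n)) z\<bar> \<le> op_bound * e z" if z: "z \<in> space M" for n z
  proof -
    have "sqrt (\<integral>x. (F (r n) x)^2 \<partial>M) \<le> 1" using norm_F[of "r n"] by simp
    then have "op_bound * e z * sqrt (\<integral>x. (F (r n) x)^2 \<partial>M) \<le> op_bound * e z"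
      using op_bound_nonneg e_nonneg[OF z] by (intro mult_right_le_one_le) auto
    then show ?thesis using abs_kernel_op_le[OF L2_F z, of "r n"] by linarith
  qed
  have g_bound: "\<bar>g z\<bar> \<le> op_bound * e z" if z: "z \<in> space M" for z
    using LIMSEQ_le_const2[OF tendsto_rabs[OF lim[OF z]]] bound[OF z] by blast
  have "L2 M g"
    using g_bound e_nonneg op_bound_nonneg
    by (intro L2_dominated[OF g_meas L2_cmult[OF L2_e, of op_bound]]) auto
  moreover have "(\<lambda>n. \<integral>x. (kernel_op (F (r n)) x - g x)^2 \<partial>M) \<longlonglongrightarrow> 0"
  proof (rule L2_dominated_convergence[OF kernel_op_measurable[OF L2_F] g_meas _ _ lim])
    show "L2 M (\<lambda>z. 2 * op_bound * e z)" by (rule L2_cmult[OF L2_e])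
    show "\<bar>kernel_op (F (r n)) z - g z\<bar> \<le> 2 * op_bound * e z" if "z \<in> space M" for n z
      using bound[OF that, of n] g_bound[OF that] by linarith
  qed
  ultimately show ?thesis using r by blast
qed

theorem compact_kernel_op: "compact_L2_op M kernel_op"
  unfolding compact_L2_op_def
proof (intro conjI allI impI)
  show "L2 M (kernel_op f)" if "L2 M f" for f
    using that by (rule L2_kernel_op)
  show "AE x in M. kernel_op (\<lambda>y. f y + a * g y) x = kernel_op f x + a * kernel_op g x"
    if "L2 M f" "L2 M g" for f g a
    using kernel_op_add_cmult[OF that] by (intro AE_I2)
  show "\<exists>r g. strict_mono r \<and> L2 M g \<and> (\<lambda>n. \<integral>x. (kernel_op (F (r n)) x - g x)^2 \<partial>M) \<longlonglongrightarrow> 0"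
    if "\<forall>n. L2 M (F n) \<and> (\<integral>x. (F n x)^2 \<partial>M) \<le> 1" for F :: "nat \<Rightarrow> 'a \<Rightarrow> real"
    using kernel_op_L2_convergent_subseq[of F] that by (simp add: L2_bounded_seq_def)
qed

end

section \<open>The configuration space \<open>(r, \<infinity>)\<^sup>k\<close>\<close>

definition rat_intervals :: "real set set" where
  "rat_intervals = (\<lambda>(a, b). {a<..<b}) ` (\<rat> \<times> \<rat>)"

lemma countable_rat_intervals: "countable rat_intervals"
  unfolding rat_intervals_def by (intro countable_image countable_SIGMA countable_rat)

lemma open_Union_rat_intervals:
  fixes S :: "real set" assumes "open S"
  shows "S = \<Union>{I \<in> rat_intervals. I \<subseteq> S}"
proof
  show "\<Union>{I \<in> rat_intervals. I \<subseteq> S} \<subseteq> S" by blast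
  show "S \<subseteq> \<Union>{I \<in> rat_intervals. I \<subseteq> S}"
  proof
    fix x assume "x \<in> S"
    then obtain e where e: "e > 0" "ball x e \<subseteq> S" using assms open_contains_ball by blast
    obtain a where a: "a \<in> \<rat>" "x - e < a" "a < x" using Rats_dense_in_real[of "x - e" x] e by auto
    obtain b where b: "b \<in> \<rat>" "x < b" "b < x + e" using Rats_dense_in_real[of x "x + e"] e by auto
    have "{a<..<b} \<subseteq> ball x e" using a b by (auto simp: ball_def dist_real_def)
    moreover have "{a<..<b} \<in> rat_intervals" using a b unfolding rat_intervals_def by force
    moreover have "x \<in> {a<..<b}" using a b by simp
    ultimately show "x \<in> \<Union>{I \<in> rat_intervals. I \<subseteq> S}" using e by blast
  qed
qed

lemma sets_borel_rat_intervals: "sets (borel :: real measure) = sigma_sets UNIV rat_intervals"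
proof
  show "sigma_sets UNIV rat_intervals \<subseteq> sets borel"
    by (rule borel_sigma_sets_subset) (auto simp: rat_intervals_def)
  interpret S: sigma_algebra UNIV "sigma_sets UNIV rat_intervals"
    by (rule sigma_algebra_sigma_sets) simp
  have "{S. open S} \<subseteq> sigma_sets UNIV rat_intervals"
  proof
    fix S :: "real set" assume "S \<in> {S. open S}"
    then have S: "S = \<Union>{I \<in> rat_intervals. I \<subseteq> S}" using open_Union_rat_intervals by blast
    have "\<Union>{I \<in> rat_intervals. I \<subseteq> S} \<in> sigma_sets UNIV rat_intervals"
      by (rule S.countable_Union) (auto intro: countable_subset[OF _ countable_rat_intervals])
    then show "S \<in> sigma_sets UNIV rat_intervals" using S by simp
  qed
  then show "sets borel \<subseteq> sigma_sets UNIV rat_intervals"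
    unfolding sets_borel by (rule sigma_sets_mono)
qed

definition rat_intervals_in :: "real \<Rightarrow> real set set" where
  "rat_intervals_in r = (\<inter>) {r<..} ` rat_intervals"

lemma sets_restrict_greaterThan: "sets (restrict_space lborel {r<..}) = sigma_sets {r<..} (rat_intervals_in r)"
proof -
  have "sets (restrict_space lborel {r<..}) = (\<inter>) {r<..} ` sets (borel :: real measure)"
    by (simp add: sets_restrict_space)
  also have "\<dots> = (\<inter>) {r<..} ` sigma_sets UNIV rat_intervals" by (simp add: sets_borel_rat_intervals)
  also have "\<dots> = sigma_sets {r<..} (rat_intervals_in r)" unfolding rat_intervals_in_def
    by (rule sigma_sets_Int) (auto simp: sets_borel_rat_intervals[symmetric])
  finally show ?thesis .
qed

lemma countable_rat_intervals_in: "countable (rat_intervals_in r)"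
  unfolding rat_intervals_in_def by (intro countable_image countable_rat_intervals)

lemma rat_intervals_in_Int: "A \<in> rat_intervals_in r \<Longrightarrow> B \<in> rat_intervals_in r \<Longrightarrow> A \<inter> B \<in> rat_intervals_in r"
proof -
  assume "A \<in> rat_intervals_in r" "B \<in> rat_intervals_in r"
  then obtain a b c d where "a \<in> \<rat>" "b \<in> \<rat>" "c \<in> \<rat>" "d \<in> \<rat>"
    and A: "A = {r<..} \<inter> {a<..<b}" and B: "B = {r<..} \<inter> {c<..<d}"
    unfolding rat_intervals_in_def rat_intervals_def by auto
  then have "max a c \<in> \<rat>" "min b d \<in> \<rat>" by (auto simp: max_def min_def)
  moreover have "A \<inter> B = {r<..} \<inter> {max a c<..<min b d}" using A B by auto
  ultimately show ?thesis unfolding rat_intervals_in_def rat_intervals_def by force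
qed

definition rat_boxes :: "nat \<Rightarrow> real \<Rightarrow> (nat \<Rightarrow> real) set set" where
  "rat_boxes k r = {PiE {..<k} A | A. A \<in> Pi {..<k} (\<lambda>_. rat_intervals_in r)}"

lemma space_Mhc: "space (Mhc k r) = PiE {..<k} (\<lambda>_. {r<..})"
  by (simp add: Mhc_def space_PiM)

lemma rat_intervals_in_subset: "A \<in> rat_intervals_in r \<Longrightarrow> A \<subseteq> {r<..}"
  by (auto simp: rat_intervals_in_def)

lemma rat_boxes_subset: "rat_boxes k r \<subseteq> Pow (space (Mhc k r))"
proof
  fix X assume "X \<in> rat_boxes k r"
  then obtain A where "A \<in> Pi {..<k} (\<lambda>_. rat_intervals_in r)" "X = PiE {..<k} A"
    unfolding rat_boxes_def by blast
  then show "X \<in> Pow (space (Mhc k r))"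
    unfolding space_Mhc using rat_intervals_in_subset by (auto intro!: PiE_mono)
qed

lemma sets_Mhc_rat_boxes: "sets (Mhc k r) = sigma_sets (space (Mhc k r)) (rat_boxes k r)"
proof -
  have "sets (Mhc k r) = sets (PiM {..<k} (\<lambda>_. sigma {r<..} (rat_intervals_in r)))"
    unfolding Mhc_def
  proof (rule sets_PiM_cong)
    show "sets (restrict_space lborel {r<..}) = sets (sigma {r<..} (rat_intervals_in r))" for i
      using rat_intervals_in_subset by (subst sets_measure_of) (auto simp: sets_restrict_greaterThan)
  qed simp
  also have "\<dots> = sets (sigma (PiE {..<k} (\<lambda>_. {r<..}))
      {{f \<in> PiE {..<k} (\<lambda>_. {r<..}). \<forall>i\<in>j. f i \<in> A i} | A j. j \<in> {{..<k}} \<and> A \<in> Pi j (\<lambda>_. rat_intervals_in r)})"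
  proof (rule sets_PiM_sigma)
    have "{r<..} = \<Union>{I \<in> rat_intervals. I \<subseteq> {r<..}}"
      by (rule open_Union_rat_intervals) simp
    also have "\<dots> \<subseteq> \<Union>(rat_intervals_in r)"
      unfolding rat_intervals_in_def by blast
    finally show "\<exists>S\<subseteq>rat_intervals_in r. countable S \<and> {r<..} = \<Union>S" for i
      using rat_intervals_in_subset countable_rat_intervals_in by blast
  qed (auto simp: rat_intervals_in_def)
  also have "{{f \<in> PiE {..<k} (\<lambda>_. {r<..}). \<forall>i\<in>j. f i \<in> A i} | A j. j \<in> {{..<k}} \<and> A \<in> Pi j (\<lambda>_. rat_intervals_in r)}
      = rat_boxes k r"
  proof -
    have "{f \<in> PiE {..<k} (\<lambda>_. {r<..}). \<forall>i\<in>{..<k}. f i \<in> A i} = PiE {..<k} A"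
      if A: "A \<in> Pi {..<k} (\<lambda>_. rat_intervals_in r)" for A
    proof (intro equalityI subsetI)
      fix f assume "f \<in> PiE {..<k} A"
      moreover have "A i \<subseteq> {r<..}" if "i < k" for i
        using A that rat_intervals_in_subset by blast
      ultimately show "f \<in> {f \<in> PiE {..<k} (\<lambda>_. {r<..}). \<forall>i\<in>{..<k}. f i \<in> A i}"
        by (auto simp: PiE_iff)
    qed (auto simp: PiE_iff)
    then show ?thesis unfolding rat_boxes_def by blast
  qed
  also have "sets (sigma (PiE {..<k} (\<lambda>_. {r<..})) (rat_boxes k r)) = sigma_sets (space (Mhc k r)) (rat_boxes k r)"
    using rat_boxes_subset by (subst sets_measure_of) (auto simp: space_Mhc)
  finally show ?thesis .
qed

lemma countable_rat_boxes: "countable (rat_boxes k r)"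
proof -
  have "rat_boxes k r \<subseteq> PiE {..<k} ` PiE {..<k} (\<lambda>_. rat_intervals_in r)"
  proof
    fix X assume "X \<in> rat_boxes k r"
    then obtain A where A: "A \<in> Pi {..<k} (\<lambda>_. rat_intervals_in r)" "X = PiE {..<k} A"
      unfolding rat_boxes_def by blast
    moreover have "PiE {..<k} A = PiE {..<k} (restrict A {..<k})" by (rule PiE_cong) simp
    ultimately show "X \<in> PiE {..<k} ` PiE {..<k} (\<lambda>_. rat_intervals_in r)"
      using A by (intro image_eqI[where x="restrict A {..<k}"]) auto
  qed
  then show ?thesis
    by (rule countable_subset) (simp add: countable_PiE countable_rat_intervals_in)
qed

lemma Int_stable_rat_boxes: "Int_stable (rat_boxes k r)"
proof (rule Int_stableI)
  fix X Y assume "X \<in> rat_boxes k r" "Y \<in> rat_boxes k r"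
  then obtain A B where A: "A \<in> Pi {..<k} (\<lambda>_. rat_intervals_in r)" "X = PiE {..<k} A"
    and B: "B \<in> Pi {..<k} (\<lambda>_. rat_intervals_in r)" "Y = PiE {..<k} B"
    unfolding rat_boxes_def by blast
  have "(\<lambda>i. A i \<inter> B i) \<in> Pi {..<k} (\<lambda>_. rat_intervals_in r)"
    using A(1) B(1) by (auto intro: rat_intervals_in_Int)
  moreover have "X \<inter> Y = PiE {..<k} (\<lambda>i. A i \<inter> B i)"
    using A(2) B(2) by (simp add: PiE_Int)
  ultimately show "X \<inter> Y \<in> rat_boxes k r"
    unfolding rat_boxes_def by blast
qed

definition bounded_box :: "nat \<Rightarrow> real \<Rightarrow> nat \<Rightarrow> (nat \<Rightarrow> real) set" where
  "bounded_box k r j = PiE {..<k} (\<lambda>_. {r<..} \<inter> {- real j<..<real j})"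

lemma bounded_box_in_rat_boxes: "bounded_box k r j \<in> rat_boxes k r"
proof -
  have "{r<..} \<inter> {- real j<..<real j} \<in> rat_intervals_in r"
    unfolding rat_intervals_in_def rat_intervals_def
    by (intro imageI image_eqI[where x="(- real j, real j)"]) auto
  then show ?thesis unfolding bounded_box_def rat_boxes_def by blast
qed

lemma incseq_bounded_box: "incseq (bounded_box k r)"
  unfolding incseq_def bounded_box_def by (intro allI impI PiE_mono) auto

lemma UN_bounded_box: "(\<Union>j. bounded_box k r j) = space (Mhc k r)"
proof
  show "(\<Union>j. bounded_box k r j) \<subseteq> space (Mhc k r)"
    unfolding bounded_box_def space_Mhc by (auto simp: PiE_iff)
  show "space (Mhc k r) \<subseteq> (\<Union>j. bounded_box k r j)"
  proof
    fix f assume f: "f \<in> space (Mhc k r)"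
    obtain j :: nat where j: "(\<Sum>i<k. \<bar>f i\<bar>) < real j" using reals_Archimedean2 by blast
    have "f i \<in> {- real j<..<real j}" if "i < k" for i
    proof -
      have "\<bar>f i\<bar> < real j"
        using member_le_sum[of i "{..<k}" "\<lambda>i. \<bar>f i\<bar>"] that j by simp
      then show ?thesis by (simp add: abs_less_iff)
    qed
    then have "f \<in> bounded_box k r j"
      using f by (auto simp: bounded_box_def space_Mhc PiE_iff)
    then show "f \<in> (\<Union>j. bounded_box k r j)" by blast
  qed
qed

lemma sigma_finite_restrict_greaterThan: "sigma_finite_measure (restrict_space lborel {r::real<..})"
  by (rule sigma_finite_measure_restrict_space[OF lborel.sigma_finite_measure_axioms])
    (simp add: greaterThan_borel)

interpretation Mhc_product: product_sigma_finite "\<lambda>_::nat. restrict_space lborel {r::real<..}" for r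
  by (simp add: product_sigma_finite_def sigma_finite_restrict_greaterThan)

lemma emeasure_bounded_box_finite: "emeasure (Mhc k r) (bounded_box k r j) < \<infinity>"
proof -
  define X where "X = {r<..} \<inter> {- real j<..<real j}"
  have X: "X \<in> sets (restrict_space lborel {r<..})"
    unfolding X_def by (simp add: sets_restrict_space_iff)
  have "emeasure (restrict_space lborel {r<..}) X = emeasure lborel X"
    by (rule emeasure_restrict_space) (auto simp: X_def)
  also have "\<dots> \<le> emeasure lborel {- real j<..<real j}"
    unfolding X_def by (rule emeasure_mono) auto
  finally have "emeasure (restrict_space lborel {r<..}) X \<noteq> \<infinity>"
    by (auto simp: top_unique)
  moreover have "emeasure (Mhc k r) (bounded_box k r j) = (\<Prod>i<k. emeasure (restrict_space lborel {r<..}) X)"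
    unfolding bounded_box_def Mhc_def X_def[symmetric] using X by (intro Mhc_product.emeasure_PiM) auto
  ultimately have "emeasure (Mhc k r) (bounded_box k r j) \<noteq> \<infinity>"
    by (simp add: power_eq_top_ennreal)
  then show ?thesis by (simp add: less_top)
qed

lemma countable_generator_Mhc: "countable_generator (Mhc k r) (rat_boxes k r) (bounded_box k r)"
  by unfold_locales
    (fact countable_rat_boxes Int_stable_rat_boxes rat_boxes_subset sets_Mhc_rat_boxes
      bounded_box_in_rat_boxes emeasure_bounded_box_finite incseq_bounded_box UN_bounded_box)+

section \<open>The transfer kernel\<close>

lemma sum_pairs_reflect:
  fixes h :: "nat \<Rightarrow> nat \<Rightarrow> 'b::comm_monoid_add"
  shows "(\<Sum>i\<in>{0..k}. \<Sum>j\<in>{i<..k}. h (k - j) (k - i)) = (\<Sum>i\<in>{0..k}. \<Sum>j\<in>{i<..k}. h i j)"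
proof -
  have "(\<Sum>(i, j)\<in>Sigma {0..k} (\<lambda>i. {i<..k}). h (k - j) (k - i))
      = (\<Sum>(i, j)\<in>Sigma {0..k} (\<lambda>i. {i<..k}). h i j)"
    by (rule sum.reindex_bij_witness[where i="\<lambda>(i, j). (k - j, k - i)" and j="\<lambda>(i, j). (k - j, k - i)"])
      auto
  then show ?thesis by (simp add: sum.Sigma)
qed

lemma sum_srev_interval:
  assumes "i \<le> j" "j \<le> k"
  shows "(\<Sum>l\<in>{i..<j}. srev k z l) = (\<Sum>l\<in>{k - j..<k - i}. z l)"
  using assms
  by (intro sum.reindex_bij_witness[where i="\<lambda>l. k - 1 - l" and j="\<lambda>l. k - 1 - l"]) (auto simp: srev_def)

lemma sum_srev: "(\<Sum>i<k. srev k z i) = (\<Sum>i<k. z i)"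
proof -
  have "(\<Sum>i<k. srev k z i) = (\<Sum>i<k. z (k - Suc i))"
    by (intro sum.cong) (auto simp: srev_def)
  also have "\<dots> = (\<Sum>i<k. z i)" by (rule sum.nat_diff_reindex)
  finally show ?thesis .
qed

lemma Vp_srev: "Vp v p k (srev k z) = Vp v p k z"
proof -
  have "(\<Sum>i\<in>{0..k}. \<Sum>j\<in>{i<..k}. v (\<Sum>l\<in>{i..<j}. srev k z l))
      = (\<Sum>i\<in>{0..k}. \<Sum>j\<in>{i<..k}. (\<lambda>a b. v (\<Sum>l\<in>{a..<b}. z l)) (k - j) (k - i))"
    by (intro sum.cong refl) (simp add: sum_srev_interval)
  also have "\<dots> = (\<Sum>i\<in>{0..k}. \<Sum>j\<in>{i<..k}. v (\<Sum>l\<in>{i..<j}. z l))"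
    by (rule sum_pairs_reflect)
  finally show ?thesis unfolding Vp_def sum_srev by simp
qed

lemma sum_srev_suffix:
  assumes "i < k"
  shows "(\<Sum>l\<in>{i..<k}. srev k y l) = (\<Sum>l\<in>{..k - 1 - i}. y l)"
proof -
  have "(\<Sum>l\<in>{i..<k}. srev k y l) = (\<Sum>l\<in>{k - k..<k - i}. y l)"
    using assms by (intro sum_srev_interval) auto
  also have "{k - k..<k - i} = {..k - 1 - i}" using assms by auto
  finally show ?thesis .
qed

lemma sum_srev_prefix:
  assumes "j < k"
  shows "(\<Sum>l\<in>{..j}. srev k x l) = (\<Sum>l\<in>{k - 1 - j..<k}. x l)"
proof -
  have "{..j} = {0..<Suc j}" by auto
  then have "(\<Sum>l\<in>{..j}. srev k x l) = (\<Sum>l\<in>{k - Suc j..<k - 0}. x l)"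
    using assms by (simp only: sum_srev_interval[of 0 "Suc j" k])
  also have "k - Suc j = k - 1 - j" by simp
  finally show ?thesis by simp
qed

lemma Wint_srev: "Wint v k (srev k y) (srev k x) = Wint v k x y"
proof -
  define h where "h a b = v ((\<Sum>l\<in>{a..<k}. x l) + (\<Sum>l\<in>{..b}. y l))" for a b
  have "Wint v k (srev k y) (srev k x) = (\<Sum>i<k. \<Sum>j<k. h (k - Suc j) (k - Suc i))"
    unfolding Wint_def h_def
    by (intro sum.cong refl) (simp add: sum_srev_suffix sum_srev_prefix add.commute)
  also have "\<dots> = (\<Sum>j<k. \<Sum>i<k. h (k - Suc j) (k - Suc i))" by (rule sum.swap)
  also have "\<dots> = (\<Sum>j<k. \<Sum>i<k. h (k - Suc j) i)"
    by (rule sum.cong[OF refl]) (rule sum.nat_diff_reindex)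
  also have "\<dots> = (\<Sum>j<k. \<Sum>i<k. h j i)"
    by (rule sum.nat_diff_reindex[where g="\<lambda>j. \<Sum>i<k. h j i"])
  also have "\<dots> = Wint v k x y" unfolding Wint_def h_def ..
  finally show ?thesis .
qed

lemma Kern_srev: "Kern v \<beta> p k x y = Kern v \<beta> p k (srev k y) (srev k x)"
  unfolding Kern_def Vp_srev Wint_srev by (simp add: ac_simps)

lemma borel_measurable_exp_neg_ereal: "exp_neg_ereal \<in> borel_measurable borel"
  unfolding exp_neg_ereal_def[abs_def] by measurable

lemma Mhc_component_measurable: "l < k \<Longrightarrow> (\<lambda>z. z l) \<in> borel_measurable (Mhc k r)"
proof -
  assume l: "l < k"
  have "(\<lambda>x. x l) \<in> measurable (PiM {..<k} (\<lambda>_. restrict_space lborel {r<..})) (restrict_space lborel {r<..})"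
    using l by (intro measurable_component_singleton) auto
  then show ?thesis
    unfolding Mhc_def by (rule measurable_compose[OF _ measurable_restrict_space1]) simp
qed

lemma Mhc_sum_measurable:
  assumes "\<And>l. l \<in> A \<Longrightarrow> l < k"
  shows "(\<lambda>z. \<Sum>l\<in>A. z l) \<in> borel_measurable (Mhc k r)"
  using assms Mhc_component_measurable by (intro borel_measurable_sum) auto

lemma Vp_measurable:
  assumes v: "v \<in> borel_measurable borel"
  shows "Vp v p k \<in> borel_measurable (Mhc k r)"
proof -
  have "(\<lambda>z. v (\<Sum>l\<in>{i..<j}. z l)) \<in> borel_measurable (Mhc k r)" if "j \<le> k" for i j
    using measurable_compose[OF Mhc_sum_measurable v, of "{i..<j}" k r] that by auto
  moreover have "(\<lambda>z. ereal (p * (\<Sum>i<k. z i))) \<in> borel_measurable (Mhc k r)"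
    using Mhc_sum_measurable[of "{..<k}" k r] by (intro borel_measurable_ereal borel_measurable_times) auto
  ultimately show ?thesis unfolding Vp_def[abs_def]
    by (intro borel_measurable_ereal_add borel_measurable_ereal_sum) auto
qed

lemma Wint_measurable:
  assumes v: "v \<in> borel_measurable borel"
  shows "(\<lambda>q. Wint v k (fst q) (snd q)) \<in> borel_measurable (Mhc k r \<Otimes>\<^sub>M Mhc k r)"
proof -
  have "(\<lambda>q. v ((\<Sum>l\<in>{i..<k}. fst q l) + (\<Sum>l\<in>{..j}. snd q l))) \<in> borel_measurable (Mhc k r \<Otimes>\<^sub>M Mhc k r)"
    if "j < k" for i j
  proof -
    have "(\<lambda>q. (\<Sum>l\<in>{i..<k}. fst q l)) \<in> borel_measurable (Mhc k r \<Otimes>\<^sub>M Mhc k r)"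
      using measurable_compose[OF measurable_fst Mhc_sum_measurable[of "{i..<k}" k r]] by auto
    moreover have "(\<lambda>q. (\<Sum>l\<in>{..j}. snd q l)) \<in> borel_measurable (Mhc k r \<Otimes>\<^sub>M Mhc k r)"
      using measurable_compose[OF measurable_snd Mhc_sum_measurable[of "{..j}" k r]] that by auto
    ultimately show ?thesis
      by (intro measurable_compose[OF _ v] borel_measurable_add)
  qed
  then show ?thesis unfolding Wint_def
    by (intro borel_measurable_ereal_sum) auto
qed

lemma Kern_measurable:
  assumes v: "v \<in> borel_measurable borel"
  shows "(\<lambda>(z, z'). Kern v \<beta> p k z z') \<in> borel_measurable (Mhc k r \<Otimes>\<^sub>M Mhc k r)"
proof -
  have a: "(\<lambda>q. Vp v p k (fst q)) \<in> borel_measurable (Mhc k r \<Otimes>\<^sub>M Mhc k r)"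
    using measurable_compose[OF measurable_fst Vp_measurable[OF v]] .
  have b: "(\<lambda>q. Vp v p k (snd q)) \<in> borel_measurable (Mhc k r \<Otimes>\<^sub>M Mhc k r)"
    using measurable_compose[OF measurable_snd Vp_measurable[OF v]] .
  have "(\<lambda>q. ereal \<beta> * (ereal (1/2) * Vp v p k (fst q) + Wint v k (fst q) (snd q)
      + ereal (1/2) * Vp v p k (snd q))) \<in> borel_measurable (Mhc k r \<Otimes>\<^sub>M Mhc k r)"
    using a b Wint_measurable[OF v] by (intro borel_measurable_ereal_times borel_measurable_ereal_add) auto
  then have "(\<lambda>q. exp_neg_ereal (ereal \<beta> * (ereal (1/2) * Vp v p k (fst q) + Wint v k (fst q) (snd q)
      + ereal (1/2) * Vp v p k (snd q)))) \<in> borel_measurable (Mhc k r \<Otimes>\<^sub>M Mhc k r)"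
    by (rule measurable_compose[OF _ borel_measurable_exp_neg_ereal])
  then show ?thesis unfolding Kern_def by (simp add: case_prod_beta')
qed

lemma integrable_exp_greaterThan:
  fixes c :: real assumes c: "c > 0"
  shows "integrable (restrict_space lborel {r<..}) (\<lambda>x. exp (- c * x))"
proof -
  have "(\<lambda>x. exp (- c * x)) absolutely_integrable_on {r..}"
    by (rule nonnegative_absolutely_integrable_1[OF integrable_on_exp_minus_to_infinity[OF c]]) auto
  then have "integrable lebesgue (\<lambda>x. indicator {r..} x *\<^sub>R exp (- c * x))"
    by (simp add: set_integrable_def)
  then have i1: "integrable lborel (\<lambda>x. indicator {r..} x *\<^sub>R exp (- c * x))"
    by (subst (asm) integrable_completion) auto
  have "integrable lborel (\<lambda>x. indicator {r<..} x *\<^sub>R exp (- c * x))"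
  proof (rule Bochner_Integration.integrable_bound[OF i1])
    show "(\<lambda>x. indicator {r<..} x *\<^sub>R exp (- c * x)) \<in> borel_measurable lborel" by simp
    show "AE x in lborel. norm (indicator {r<..} x *\<^sub>R exp (- c * x)) \<le> norm (indicator {r..} x *\<^sub>R exp (- c * x))"
      by (intro AE_I2) (auto simp: indicator_def)
  qed
  then show ?thesis by (subst integrable_restrict_space) auto
qed

definition Mhc_weight :: "real \<Rightarrow> nat \<Rightarrow> (nat \<Rightarrow> real) \<Rightarrow> real" where
  "Mhc_weight c k z = exp (- c * (\<Sum>i<k. z i))"

lemma Mhc_weight_measurable: "Mhc_weight c k \<in> borel_measurable (Mhc k r)"
proof -
  have s[measurable]: "(\<lambda>z. \<Sum>i<k. z i) \<in> borel_measurable (Mhc k r)" by (rule Mhc_sum_measurable) auto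
  show ?thesis unfolding Mhc_weight_def[abs_def] by measurable
qed

lemma Mhc_weight_square_integrable:
  assumes c: "c > 0"
  shows "integrable (Mhc k r) (\<lambda>z. (Mhc_weight c k z)^2)"
proof -
  have eq: "(Mhc_weight c k z)^2 = (\<Prod>i\<in>{..<k}. exp (- (2 * c) * z i))" for z
  proof -
    have "(Mhc_weight c k z)^2 = exp (2 * (- c * (\<Sum>i<k. z i)))"
      unfolding Mhc_weight_def by (simp add: power2_eq_square exp_add[symmetric])
    also have "2 * (- c * (\<Sum>i<k. z i)) = (\<Sum>i<k. - (2 * c) * z i)"
      by (simp add: sum_distrib_left mult.assoc)
    also have "exp \<dots> = (\<Prod>i\<in>{..<k}. exp (- (2 * c) * z i))" by (rule exp_sum) simp
    finally show ?thesis .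
  qed
  have "integrable (Mhc k r) (\<lambda>z. \<Prod>i\<in>{..<k}. exp (- (2 * c) * z i))"
    unfolding Mhc_def
    by (rule Mhc_product.product_integrable_prod[where f="\<lambda>i x. exp (- (2 * c) * x)"]) (use c integrable_exp_greaterThan in auto)
  then show ?thesis by (simp add: eq)
qed

definition Vp_real :: "(real \<Rightarrow> ereal) \<Rightarrow> real \<Rightarrow> nat \<Rightarrow> (nat \<Rightarrow> real) \<Rightarrow> real" where
  "Vp_real v p k z = (\<Sum>i\<in>{0..k}. \<Sum>j\<in>{i<..k}. real_of_ereal (v (\<Sum>l\<in>{i..<j}. z l))) + p * (\<Sum>i<k. z i)"

definition Wint_real :: "(real \<Rightarrow> ereal) \<Rightarrow> nat \<Rightarrow> (nat \<Rightarrow> real) \<Rightarrow> (nat \<Rightarrow> real) \<Rightarrow> real" where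
  "Wint_real v k z z' = (\<Sum>i<k. \<Sum>j<k. real_of_ereal (v ((\<Sum>l\<in>{i..<k}. z l) + (\<Sum>l\<in>{..j}. z' l))))"

lemma sum_interval_gt:
  fixes z :: "nat \<Rightarrow> real"
  assumes "\<forall>l<k. r < z l" "0 < r" "i < j" "j \<le> k"
  shows "r < (\<Sum>l\<in>{i..<j}. z l)"
proof -
  have "z i \<le> (\<Sum>l\<in>{i..<j}. z l)"
    using assms by (intro member_le_sum) (auto intro!: less_imp_le[OF less_trans[OF \<open>0 < r\<close>]])
  moreover have "r < z i" using assms by auto
  ultimately show ?thesis by linarith
qed

lemma Wint_argument_gt:
  fixes z z' :: "nat \<Rightarrow> real"
  assumes z: "\<forall>l<k. r < z l" and z': "\<forall>l<k. r < z' l" and r: "0 < r" and j: "j < k"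
  shows "r < (\<Sum>l\<in>{i..<k}. z l) + (\<Sum>l\<in>{..j}. z' l)"
proof -
  have "0 \<le> (\<Sum>l\<in>{i..<k}. z l)"
    using z r by (intro sum_nonneg) (auto intro: less_imp_le less_trans)
  moreover have "{..j} = {0..<Suc j}" by auto
  ultimately show ?thesis
    using sum_interval_gt[OF z' r, of 0 "Suc j"] j by simp
qed

lemma sum_ge_nonpos_bound:
  fixes f :: "'a \<Rightarrow> real"
  assumes "finite A" "card A \<le> n" "\<And>i. i \<in> A \<Longrightarrow> c \<le> f i" "c \<le> 0"
  shows "real n * c \<le> sum f A"
proof -
  have "real n * c \<le> real (card A) * c" using assms by (intro mult_right_mono_neg) auto
  also have "\<dots> \<le> sum f A" using sum_bounded_below[of A c f] assms by simp
  finally show ?thesis .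
qed

context
  fixes v :: "real \<Rightarrow> ereal" and r C :: real
  assumes r_pos: "0 < r" and C_nonpos: "C \<le> 0"
    and v_bounded_below: "\<And>x. r < x \<Longrightarrow> v x \<noteq> \<infinity> \<and> ereal C \<le> v x"
begin

lemma v_eq_real: "r < x \<Longrightarrow> v x = ereal (real_of_ereal (v x))"
  using v_bounded_below[of x] by (cases "v x") auto

lemma v_real_ge: "r < x \<Longrightarrow> C \<le> real_of_ereal (v x)"
  using v_bounded_below[of x] v_eq_real[of x] by (metis ereal_less_eq(3))

lemma Vp_eq_real:
  assumes z: "\<forall>l<k. r < z l"
  shows "Vp v p k z = ereal (Vp_real v p k z)"
proof -
  have "(\<Sum>j\<in>{i<..k}. v (\<Sum>l\<in>{i..<j}. z l)) = (\<Sum>j\<in>{i<..k}. ereal (real_of_ereal (v (\<Sum>l\<in>{i..<j}. z l))))" for i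
    using sum_interval_gt[OF z r_pos] v_eq_real by (intro sum.cong) auto
  then show ?thesis unfolding Vp_def Vp_real_def by simp
qed

lemma Wint_eq_real:
  assumes "\<forall>l<k. r < z l" "\<forall>l<k. r < z' l"
  shows "Wint v k z z' = ereal (Wint_real v k z z')"
proof -
  have "Wint v k z z' = (\<Sum>i<k. \<Sum>j<k. ereal (real_of_ereal (v ((\<Sum>l\<in>{i..<k}. z l) + (\<Sum>l\<in>{..j}. z' l)))))"
    unfolding Wint_def using Wint_argument_gt[OF assms r_pos] v_eq_real by (intro sum.cong refl) auto
  then show ?thesis unfolding Wint_real_def by simp
qed

lemma Kern_eq_exp:
  assumes "\<forall>l<k. r < z l" "\<forall>l<k. r < z' l"
  shows "Kern v \<beta> p k z z' = exp (- (\<beta> * (Vp_real v p k z / 2 + Wint_real v k z z' + Vp_real v p k z' / 2)))"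
  unfolding Kern_def Vp_eq_real[OF assms(1)] Vp_eq_real[OF assms(2)] Wint_eq_real[OF assms]
  by (simp add: exp_neg_ereal_def)

lemma Kern_pos: "\<forall>l<k. r < z l \<Longrightarrow> \<forall>l<k. r < z' l \<Longrightarrow> 0 < Kern v \<beta> p k z z'"
  by (simp add: Kern_eq_exp)

lemma Vp_real_ge:
  assumes z: "\<forall>l<k. r < z l"
  shows "real (Suc k) * (real (Suc k) * C) + p * (\<Sum>i<k. z i) \<le> Vp_real v p k z"
proof -
  have "real (Suc k) * (real (Suc k) * C) \<le> (\<Sum>i\<in>{0..k}. \<Sum>j\<in>{i<..k}. real_of_ereal (v (\<Sum>l\<in>{i..<j}. z l)))"
    using C_nonpos sum_interval_gt[OF z r_pos] v_real_ge
    by (intro sum_ge_nonpos_bound) (auto simp: mult_nonneg_nonpos)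
  then show ?thesis unfolding Vp_real_def by simp
qed

lemma Wint_real_ge:
  assumes "\<forall>l<k. r < z l" "\<forall>l<k. r < z' l"
  shows "real k * (real k * C) \<le> Wint_real v k z z'"
  unfolding Wint_real_def
  using C_nonpos Wint_argument_gt[OF assms r_pos] v_real_ge
  by (intro sum_ge_nonpos_bound) (auto simp: mult_nonneg_nonpos)

lemma Kern_le_product:
  assumes \<beta>: "0 \<le> \<beta>" and z: "z \<in> space (Mhc k r)" and z': "z' \<in> space (Mhc k r)"
  shows "\<bar>Kern v \<beta> p k z z'\<bar> \<le> exp (- (\<beta> * (real (Suc k) * (real (Suc k) * C) + real k * (real k * C))))
      * Mhc_weight (\<beta> * p / 2) k z * Mhc_weight (\<beta> * p / 2) k z'"
proof -
  have zz: "\<forall>l<k. r < z l" "\<forall>l<k. r < z' l"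
    using z z' by (auto simp: space_Mhc)
  have "(real (Suc k) * (real (Suc k) * C) + real k * (real k * C))
      + (p/2) * (\<Sum>i<k. z i) + (p/2) * (\<Sum>i<k. z' i)
      \<le> Vp_real v p k z / 2 + Wint_real v k z z' + Vp_real v p k z' / 2"
    using Vp_real_ge[OF zz(1), where p=p] Vp_real_ge[OF zz(2), where p=p] Wint_real_ge[OF zz]
    by (simp add: field_simps)
  then have "\<beta> * ((real (Suc k) * (real (Suc k) * C) + real k * (real k * C))
      + (p/2) * (\<Sum>i<k. z i) + (p/2) * (\<Sum>i<k. z' i))
      \<le> \<beta> * (Vp_real v p k z / 2 + Wint_real v k z z' + Vp_real v p k z' / 2)"
    using \<beta> by (intro mult_left_mono)
  then show ?thesis
    unfolding Kern_eq_exp[OF zz] Mhc_weight_def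
    by (simp add: exp_add[symmetric] algebra_simps)
qed

end

theorem lemma6p1:
  fixes v :: "real \<Rightarrow> ereal" and r_hc R \<beta> p :: real and m k :: nat
  assumes v_meas: "v \<in> borel_measurable borel"
    and v_not_minf: "\<forall>x\<ge>0. v x \<noteq> -\<infinity>"
    and r_pos: "r_hc > 0"
    and hard_core: "\<forall>x\<in>{0..r_hc}. v x = \<infinity>"
    and range: "\<forall>x\<ge>R. v x = 0"
    and fin_below: "\<exists>C::real. \<forall>x>r_hc. v x \<noteq> \<infinity> \<and> ereal C \<le> v x"
    and m_ge: "m \<ge> 2"
    and R_lt: "R < (real m + 1) * r_hc"
    and k_def: "k = m - 1"
    and beta_pos: "\<beta> > 0"
    and p_pos: "p > 0"
  shows "(\<forall>x y. (\<forall>i<k. x i \<ge> 0 \<and> y i \<ge> 0) \<longrightarrow>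
            Kern v \<beta> p k x y = Kern v \<beta> p k (srev k y) (srev k x))
       \<and> (\<forall>x y. (\<forall>i<k. x i > r_hc \<and> y i > r_hc) \<longrightarrow> Kern v \<beta> p k x y > 0)
       \<and> (\<forall>f z. L2 (Mhc k r_hc) f \<longrightarrow> z \<in> space (Mhc k r_hc) \<longrightarrow>
            integrable (Mhc k r_hc) (\<lambda>z'. Kern v \<beta> p k z z' * f z'))
       \<and> compact_L2_op (Mhc k r_hc) (Kop v \<beta> p k r_hc)"
proof -
  obtain C where C: "\<And>x. r_hc < x \<Longrightarrow> v x \<noteq> \<infinity> \<and> ereal C \<le> v x"
    using fin_below by blast
  define C0 where "C0 = min C 0"
  have C0: "C0 \<le> 0" by (simp add: C0_def)
  have v_bounded: "r_hc < x \<Longrightarrow> v x \<noteq> \<infinity> \<and> ereal C0 \<le> v x" for x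
    using C[of x] by (auto simp: C0_def intro: order_trans[rotated])
  define A where "A = exp (- (\<beta> * (real (Suc k) * (real (Suc k) * C0) + real k * (real k * C0))))"
  interpret product_dominated_kernel "Mhc k r_hc" "rat_boxes k r_hc" "bounded_box k r_hc"
    "Kern v \<beta> p k" "Mhc_weight (\<beta> * p / 2) k" A
  proof (intro product_dominated_kernel.intro product_dominated_kernel_axioms.intro countable_generator_Mhc)
    show "(\<lambda>(z, z'). Kern v \<beta> p k z z') \<in> borel_measurable (Mhc k r_hc \<Otimes>\<^sub>M Mhc k r_hc)"
      by (rule Kern_measurable[OF v_meas])
    show "L2 (Mhc k r_hc) (Mhc_weight (\<beta> * p / 2) k)"
      using Mhc_weight_measurable Mhc_weight_square_integrable beta_pos p_pos by (simp add: L2_def)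
    show "\<bar>Kern v \<beta> p k z z'\<bar> \<le> A * Mhc_weight (\<beta> * p / 2) k z * Mhc_weight (\<beta> * p / 2) k z'"
      if "z \<in> space (Mhc k r_hc)" "z' \<in> space (Mhc k r_hc)" for z z'
      using Kern_le_product[OF r_pos C0 v_bounded _ that] beta_pos by (simp add: A_def)
  qed (simp_all add: A_def Mhc_weight_def)
  have "Kop v \<beta> p k r_hc = kernel_op"
    by (simp add: fun_eq_iff Kop_def kernel_op_def)
  then show ?thesis
    using Kern_srev Kern_pos[OF r_pos C0 v_bounded] integrable_kernel_mult compact_kernel_op by auto
qed

end
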